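(* Fix $\lambda\ge0$, $n,m\ge1$, $N=n+m$, points $Z_1,\dots,Z_N\in\mathcal Z=\mathcal X\times\mathcal W$ and responses $Y_1,\dots,Y_n$. In the setting and notation described in the context (Hilbert space $\bar{\mathcal K}$ with inner product $\langle\cdot,\cdot\rangle_\star$, embedded dictionaries $\mathcal D_f^\star,\mathcal D_g^\star$, and the iterates of Algorithm 1), for every $k\ge1$, $$A_k:=\sup_{a\in\mathcal D_f^\star}\langle r_k,a\rangle_\star\le R_\lambda\alpha_k,\qquad B_k:=\sup_{b\in\mathcal D_g^\star}\langle r_k,b\rangle_\star\le R_\lambda\alpha_k+R_\lambda\beta_k,$$ where $R_\lambda=\max\{1,\sqrt\lambda\}$.
   Context: Let $\hat P^{(1)}=\frac1N\sum_{i=1}^n\delta_{Z_i}$, $\hat P^{(2)}=\frac1N\sum_{j=n+1}^N\delta_{Z_j}$, $\hat P^{(3)}=\lambda\hat P^{(1)}$, and $\hat P_N^Z=\hat P^{(1)}+\hat P^{(2)}$. For pairs $u=(u_1,u_2)$, $v=(v_1,v_2)$ of real functions on $\{Z_1,\dots,Z_N\}$ define $\langle u,v\rangle_\star=\langle u_1,v_1\rangle_{L^2(\hat P^{(1)})}+\langle u_1-u_2,v_1-v_2\rangle_{L^2(\hat P^{(2)})}+\langle u_2,v_2\rangle_{L^2(\hat P^{(3)})}$; this is positive semidefinite, and $\bar{\mathcal K}$ is the quotient by its null space (all projections, norms $\|\cdot\|_\star$, orthogonality below are in $\bar{\mathcal K}$). Let $Y$ be any extension of the labels to all $N$ points and $T=(Y,Y)$.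 Let $\mathcal D_f$ be a finite dictionary of functions of $x$ (viewed on $\mathcal Z$) and $\mathcal D_g$ a finite dictionary of functions on $\mathcal Z$, all with $\|\cdot\|_{L^2(\hat P_N^Z)}\le1$; set $\mathcal D_f^\star=\{(\psi,0):\psi\in\mathcal D_f\}$, $\mathcal D_g^\star=\{(0,\phi):\phi\in\mathcal D_g\}$, and assume $\mathcal D_f^\star\cup\mathcal D_g^\star$ is closed under negation. Algorithm 1: set $(f_0,g_0)=(0,0)$, $S_0^f=S_0^g=\{0\}$; for $k=1,2,\dots$: $r_k=T-(f_{k-1},g_{k-1})$; choose $\psi_k^\star=(\psi_k,0)\in\arg\max\{\langle r_k,\Pi^\perp_{S_{k-1}^f}a\rangle_\star/\|\Pi^\perp_{S_{k-1}^f}a\|_\star: a\in\mathcal D_f^\star,\ \|\Pi^\perp_{S_{k-1}^f}a\|_\star>0\}$; set $S_k^f=\mathrm{span}(\psi_1^\star,\dots,\psi_k^\star)$, $(f_k,g_{k-1})=(f_{k-1},g_{k-1})+\Pi_{S_k^f}r_k$, $r_k^{(g)}=r_k-\Pi_{S_k^f}r_k$; choose $\phi_k^\star=(0,\phi_k)\in\arg\max\{\langle r_k^{(g)},\Pi^\perp_{S_{k-1}^g}b\rangle_\star/\|\Pi^\perp_{S_{k-1}^g}b\|_\star: b\in\mathcal D_g^\star,\ \|\Pi^\perp_{S_{k-1}^g}b\|_\star>0\}$; set $S_k^g=\mathrm{span}(\phi_1^\star,\dots,\phi_k^\star)$ and $(f_k,g_k)=(f_k,g_{k-1})+\Pi_{S_k^g}r_k^{(g)}$.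 Here $\Pi_S$, $\Pi_S^\perp$ are orthogonal projections onto $S$ and its orthogonal complement. Define $\alpha_k=\|\Pi_{S_k^f}r_k\|_\star$ and $\beta_k=\|\Pi_{S_k^g}r_k^{(g)}\|_\star$. *)

theory Defs
  imports "HOL-Analysis.Analysis"
begin

text \<open>Elements of the (pre-)Hilbert space: pairs u = (u1,u2) of real functions on the
sample space 'z.  Only their values at the sample points Z 0, ..., Z (N-1) matter.
The first n points are the labelled ones (hat P^(1)), the points n..N-1 are the
unlabelled ones (hat P^(2)), and hat P^(3) = lam * hat P^(1).\<close>

type_synonym 'z elt = "('z \<Rightarrow> real) \<times> ('z \<Rightarrow> real)"

definition padd :: "'z elt \<Rightarrow> 'z elt \<Rightarrow> 'z elt" where
  "padd u v = ((\<lambda>z. fst u z + fst v z), (\<lambda>z. snd u z + snd v z))"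

definition psub :: "'z elt \<Rightarrow> 'z elt \<Rightarrow> 'z elt" where
  "psub u v = ((\<lambda>z. fst u z - fst v z), (\<lambda>z. snd u z - snd v z))"

definition pzero :: "'z elt" where
  "pzero = ((\<lambda>z. 0), (\<lambda>z. 0))"

definition ipS :: "nat \<Rightarrow> nat \<Rightarrow> real \<Rightarrow> (nat \<Rightarrow> 'z) \<Rightarrow> 'z elt \<Rightarrow> 'z elt \<Rightarrow> real" where
  "ipS n N lam Z u v =
     (1 / real N) * (\<Sum>i<n. fst u (Z i) * fst v (Z i))
   + (1 / real N) * (\<Sum>j\<in>{n..<N}. (fst u (Z j) - snd u (Z j)) * (fst v (Z j) - snd v (Z j)))
   + lam * ((1 / real N) * (\<Sum>i<n. snd u (Z i) * snd v (Z i)))"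

definition normS :: "nat \<Rightarrow> nat \<Rightarrow> real \<Rightarrow> (nat \<Rightarrow> 'z) \<Rightarrow> 'z elt \<Rightarrow> real" where
  "normS n N lam Z u = sqrt (ipS n N lam Z u u)"

definition lincomb :: "(nat \<Rightarrow> real) \<Rightarrow> 'z elt list \<Rightarrow> 'z elt" where
  "lincomb c vs = ((\<lambda>z. \<Sum>i<length vs. c i * fst (vs ! i) z),
                   (\<lambda>z. \<Sum>i<length vs. c i * snd (vs ! i) z))"

definition spanL :: "'z elt list \<Rightarrow> 'z elt set" where
  "spanL vs = {p. \<exists>c. p = lincomb c vs}"

text \<open>In the quotient space this is unique; we pick a
representative.\<close>
definition isProj :: "nat \<Rightarrow> nat \<Rightarrow> real \<Rightarrow> (nat \<Rightarrow> 'z) \<Rightarrow> 'z elt set \<Rightarrow> 'z elt \<Rightarrow> 'z elt \<Rightarrow> bool" where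
  "isProj n N lam Z S r p \<longleftrightarrow> p \<in> S \<and> (\<forall>s\<in>S. ipS n N lam Z (psub r p) s = 0)"

definition projS :: "nat \<Rightarrow> nat \<Rightarrow> real \<Rightarrow> (nat \<Rightarrow> 'z) \<Rightarrow> 'z elt set \<Rightarrow> 'z elt \<Rightarrow> 'z elt" where
  "projS n N lam Z S r = (SOME p. isProj n N lam Z S r p)"

definition perpS :: "nat \<Rightarrow> nat \<Rightarrow> real \<Rightarrow> (nat \<Rightarrow> 'z) \<Rightarrow> 'z elt set \<Rightarrow> 'z elt \<Rightarrow> 'z elt" where
  "perpS n N lam Z S r = psub r (projS n N lam Z S r)"

definition embF :: "('x \<Rightarrow> real) \<Rightarrow> ('x \<times> 'w) elt" where
  "embF \<psi> = ((\<lambda>z. \<psi> (fst z)), (\<lambda>z. 0))"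

definition embG :: "('x \<times> 'w \<Rightarrow> real) \<Rightarrow> ('x \<times> 'w) elt" where
  "embG \<phi> = ((\<lambda>z. 0), \<phi>)"

definition L2PN_sq :: "nat \<Rightarrow> (nat \<Rightarrow> 'z) \<Rightarrow> ('z \<Rightarrow> real) \<Rightarrow> real" where
  "L2PN_sq N Z h = (1 / real N) * (\<Sum>i<N. (h (Z i))^2)"

definition ratioS :: "nat \<Rightarrow> nat \<Rightarrow> real \<Rightarrow> (nat \<Rightarrow> 'z) \<Rightarrow> 'z elt set \<Rightarrow> 'z elt \<Rightarrow> 'z elt \<Rightarrow> real" where
  "ratioS n N lam Z S r a =
     ipS n N lam Z r (perpS n N lam Z S a) / normS n N lam Z (perpS n N lam Z S a)"

definition isArgmax :: "nat \<Rightarrow> nat \<Rightarrow> real \<Rightarrow> (nat \<Rightarrow> 'z) \<Rightarrow> 'z elt set \<Rightarrow> 'z elt \<Rightarrow> 'z elt set \<Rightarrow> 'z elt \<Rightarrow> bool" where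
  "isArgmax n N lam Z S r D a \<longleftrightarrow>
     a \<in> D \<and> normS n N lam Z (perpS n N lam Z S a) > 0 \<and>
     (\<forall>b\<in>D. normS n N lam Z (perpS n N lam Z S b) > 0 \<longrightarrow>
              ratioS n N lam Z S r b \<le> ratioS n N lam Z S r a)"

text \<open>Quantities of Algorithm 1: spans S_k^f, S_k^g, residuals r_k and r_k^(g),
with target T = (Y,Y) and iterates FG k = (f_k, g_k).\<close>
definition SfA :: "(nat \<Rightarrow> 'x \<Rightarrow> real) \<Rightarrow> nat \<Rightarrow> ('x \<times> 'w) elt set" where
  "SfA \<psi> k = spanL (map (\<lambda>i. embF (\<psi> i)) [1..<Suc k])"

definition SgA :: "(nat \<Rightarrow> 'x \<times> 'w \<Rightarrow> real) \<Rightarrow> nat \<Rightarrow> ('x \<times> 'w) elt set" where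
  "SgA \<phi> k = spanL (map (\<lambda>i. embG (\<phi> i)) [1..<Suc k])"

definition resA :: "('z \<Rightarrow> real) \<Rightarrow> (nat \<Rightarrow> 'z elt) \<Rightarrow> nat \<Rightarrow> 'z elt" where
  "resA Y FG k = psub (Y, Y) (FG (k - 1))"

definition resgA :: "nat \<Rightarrow> nat \<Rightarrow> real \<Rightarrow> (nat \<Rightarrow> 'x \<times> 'w) \<Rightarrow> ('x \<times> 'w \<Rightarrow> real)
    \<Rightarrow> (nat \<Rightarrow> 'x \<Rightarrow> real) \<Rightarrow> (nat \<Rightarrow> ('x \<times> 'w) elt) \<Rightarrow> nat \<Rightarrow> ('x \<times> 'w) elt" where
  "resgA n N lam Z Y \<psi> FG k =
     psub (resA Y FG k) (projS n N lam Z (SfA \<psi> k) (resA Y FG k))"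

end

theory Submission
  imports Defs
begin

(* Decompose a dictionary element a = pa + q with pa in the old span S and
   q orthogonal to S, and let u be the part of the newly chosen atom orthogonal to S.
   The residual r and its projection p onto the new span agree against pa and u, and the
   greedy choice bounds <r, q> by |<p, u>| ||q|| / ||u||. Replacing q by a multiple of u
   of the same norm gives an element with the norm of a, so Cauchy-Schwarz yields
   <r, a> <= ||p|| ||a||. All dictionary atoms have norm at most max 1 (sqrt lam), which
   is the first bound; for the second, r = (r - p) + p, and the same argument applied to
   the residual r - p of the g-step adds the term with beta_k. *)

definition pscale :: "real \<Rightarrow> 'z elt \<Rightarrow> 'z elt" where
  "pscale t u = ((\<lambda>z. t * fst u z), (\<lambda>z. t * snd u z))"

lemma lincomb_snoc: "lincomb c (vs @ [w]) = padd (lincomb c vs) (pscale (c (length vs)) w)"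
  by (simp add: lincomb_def padd_def pscale_def nth_append)

lemma spanL_snocE:
  assumes "x \<in> spanL (vs @ [w])"
  obtains s t where "s \<in> spanL vs" "x = padd s (pscale t w)"
  using assms lincomb_snoc unfolding spanL_def by blast

lemma spanL_mono_snoc: "spanL vs \<subseteq> spanL (vs @ [w])"
proof
  fix x assume "x \<in> spanL vs"
  then obtain c where x: "x = lincomb c vs" by (auto simp: spanL_def)
  have "lincomb c vs = lincomb (c(length vs := 0)) vs"
    unfolding lincomb_def by (auto intro!: sum.cong)
  then have "x = lincomb (c(length vs := 0)) (vs @ [w])"
    by (simp add: lincomb_snoc x padd_def pscale_def)
  then show "x \<in> spanL (vs @ [w])" unfolding spanL_def by blast
qed

lemma snoc_in_spanL: "w \<in> spanL (vs @ [w])"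
proof -
  define c where "c = (\<lambda>i::nat. if i = length vs then (1::real) else 0)"
  have "lincomb c vs = pzero"
    unfolding lincomb_def c_def pzero_def by auto
  then have "w = lincomb c (vs @ [w])"
    by (simp add: lincomb_snoc padd_def pscale_def pzero_def c_def)
  then show ?thesis unfolding spanL_def by blast
qed

lemma spanL_padd: "x \<in> spanL vs \<Longrightarrow> y \<in> spanL vs \<Longrightarrow> padd x y \<in> spanL vs"
proof -
  assume "x \<in> spanL vs" "y \<in> spanL vs"
  then obtain c d where "x = lincomb c vs" "y = lincomb d vs" by (auto simp: spanL_def)
  then have "padd x y = lincomb (\<lambda>i. c i + d i) vs"
    by (simp add: lincomb_def padd_def distrib_right sum.distrib)
  then show ?thesis unfolding spanL_def by blast
qed

lemma spanL_pscale: "x \<in> spanL vs \<Longrightarrow> pscale t x \<in> spanL vs"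
proof -
  assume "x \<in> spanL vs"
  then obtain c where "x = lincomb c vs" by (auto simp: spanL_def)
  then have "pscale t x = lincomb (\<lambda>i. t * c i) vs"
    by (simp add: lincomb_def pscale_def sum_distrib_left mult.assoc)
  then show ?thesis unfolding spanL_def by blast
qed

lemma spanL_psub: "x \<in> spanL vs \<Longrightarrow> y \<in> spanL vs \<Longrightarrow> psub x y \<in> spanL vs"
proof -
  assume "x \<in> spanL vs" "y \<in> spanL vs"
  then have "padd x (pscale (-1) y) \<in> spanL vs" by (intro spanL_padd spanL_pscale)
  moreover have "padd x (pscale (-1) y) = psub x y" by (simp add: padd_def pscale_def psub_def)
  ultimately show ?thesis by simp
qed

context
  fixes n N :: nat and lam :: real and Z :: "nat \<Rightarrow> 'z"
  assumes lam_nonneg: "lam \<ge> 0"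
begin

abbreviation ip :: "'z elt \<Rightarrow> 'z elt \<Rightarrow> real" where "ip \<equiv> ipS n N lam Z"
abbreviation nrm :: "'z elt \<Rightarrow> real" where "nrm \<equiv> normS n N lam Z"

lemma ip_commute: "ip u v = ip v u"
  by (simp add: ipS_def mult.commute)

lemma ip_padd_left: "ip (padd u v) w = ip u w + ip v w"
proof -
  have e: "\<And>a b c d e f::real. (a + b - (c + d)) * (e - f) = (a - c) * (e - f) + (b - d) * (e - f)"
    by algebra
  show ?thesis
    unfolding ipS_def padd_def fst_conv snd_conv e distrib_right sum.distrib by (simp add: ring_distribs)
qed

lemma ip_psub_left: "ip (psub u v) w = ip u w - ip v w"
proof -
  have e: "\<And>a b c d e f::real. (a - b - (c - d)) * (e - f) = (a - c) * (e - f) - (b - d) * (e - f)"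
    by algebra
  show ?thesis
    unfolding ipS_def psub_def fst_conv snd_conv e left_diff_distrib sum_subtractf by (simp add: ring_distribs)
qed

lemma ip_pscale_left: "ip (pscale t u) w = t * ip u w"
  by (simp add: ipS_def pscale_def algebra_simps sum_distrib_left)

lemma ip_padd_right: "ip w (padd u v) = ip w u + ip w v"
  by (metis ip_commute ip_padd_left)

lemma ip_psub_right: "ip w (psub u v) = ip w u - ip w v"
  by (metis ip_commute ip_psub_left)

lemma ip_pscale_right: "ip w (pscale t u) = t * ip w u"
  by (metis ip_commute ip_pscale_left)

lemma ip_self_nonneg: "ip u u \<ge> 0"
  unfolding ipS_def using lam_nonneg
  by (intro add_nonneg_nonneg zero_le_square mult_nonneg_nonneg sum_nonneg) auto

lemma nrm_nonneg: "nrm u \<ge> 0"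
  by (simp add: normS_def ip_self_nonneg)

lemma ip_Cauchy_Schwarz_ineq: "(ip u v)\<^sup>2 \<le> ip u u * ip v v"
proof -
  have expand: "0 \<le> ip u u - 2 * t * ip u v + t\<^sup>2 * ip v v" for t
    using ip_self_nonneg[of "psub u (pscale t v)"]
    by (simp add: ip_psub_left ip_psub_right ip_pscale_left ip_pscale_right ip_commute[of v u]
        power2_eq_square algebra_simps)
  show ?thesis
  proof (cases "ip v v = 0")
    case True
    have "ip u v = 0"
    proof (rule ccontr)
      assume "ip u v \<noteq> 0"
      then have "ip u u - 2 * ((ip u u + 1) / (2 * ip u v)) * ip u v = -1"
        by (simp add: field_simps)
      then show False using expand[of "(ip u u + 1) / (2 * ip u v)"] True by simp
    qed
    then show ?thesis using True by simp
  next
    case False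
    then have pos: "ip v v > 0" using ip_self_nonneg[of v] by simp
    have "ip u u - 2 * (ip u v / ip v v) * ip u v + (ip u v / ip v v)\<^sup>2 * ip v v
        = ip u u - (ip u v)\<^sup>2 / ip v v"
      using pos by (simp add: power2_eq_square field_simps)
    then have "(ip u v)\<^sup>2 / ip v v \<le> ip u u" using expand[of "ip u v / ip v v"] by simp
    then show ?thesis using pos by (simp add: divide_le_eq mult.commute)
  qed
qed

lemma ip_le_nrm_mult: "ip u v \<le> nrm u * nrm v"
proof -
  have "\<bar>ip u v\<bar> = sqrt ((ip u v)\<^sup>2)" by simp
  also have "\<dots> \<le> sqrt (ip u u * ip v v)" using ip_Cauchy_Schwarz_ineq real_sqrt_le_mono by blast
  also have "\<dots> = nrm u * nrm v" by (simp add: normS_def real_sqrt_mult)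
  finally show ?thesis by simp
qed

lemma ip_null_right: "ip v v = 0 \<Longrightarrow> ip u v = 0"
  using ip_Cauchy_Schwarz_ineq[of u v] by simp

lemma isProj_snoc:
  assumes r: "isProj n N lam Z (spanL vs) r pr" and w: "isProj n N lam Z (spanL vs) w pw"
  shows "\<exists>p. isProj n N lam Z (spanL (vs @ [w])) r p"
proof -
  define S' where "S' = spanL (vs @ [w])"
  define u where "u = psub w pw"
  define c where "c = ip (psub r pr) u / ip u u"
  define p where "p = padd pr (pscale c u)"
  have pr: "pr \<in> spanL vs" "\<And>s. s \<in> spanL vs \<Longrightarrow> ip (psub r pr) s = 0"
    using r unfolding isProj_def by auto
  have pw: "pw \<in> spanL vs" "\<And>s. s \<in> spanL vs \<Longrightarrow> ip u s = 0"
    using w unfolding isProj_def u_def by auto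
  \<comment> \<open>Gram-Schmidt step. If u is null, then c = 0 by division by zero, but then r - pr is
      orthogonal to u anyway.\<close>
  have c: "c * ip u u = ip (psub r pr) u"
    using ip_null_right[of u "psub r pr"] by (cases "ip u u = 0") (simp_all add: c_def)
  have "u \<in> S'"
    unfolding u_def S'_def using pw(1) spanL_mono_snoc snoc_in_spanL by (blast intro: spanL_psub)
  then have "p \<in> S'"
    unfolding p_def S'_def using pr(1) spanL_mono_snoc by (blast intro: spanL_padd spanL_pscale)
  moreover have "ip (psub r p) x = 0" if "x \<in> S'" for x
  proof -
    have "w = padd u pw" by (simp add: u_def padd_def psub_def)
    then obtain s t where s: "s \<in> spanL vs" and x: "x = padd s (pscale t (padd u pw))"
      using \<open>x \<in> S'\<close> spanL_snocE unfolding S'_def by metis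
    have rx: "ip (psub r pr) x = t * ip (psub r pr) u"
      using pr(2)[OF s] pr(2)[OF pw(1)] by (simp add: x ip_padd_right ip_pscale_right)
    have ux: "ip u x = t * ip u u"
      using pw(2)[OF s] pw(2)[OF pw(1)] by (simp add: x ip_padd_right ip_pscale_right)
    have "psub r p = psub (psub r pr) (pscale c u)"
      by (simp add: p_def psub_def padd_def pscale_def algebra_simps)
    then show ?thesis using rx ux c by (simp add: ip_psub_left ip_pscale_left)
  qed
  ultimately show ?thesis unfolding isProj_def S'_def by blast
qed

lemma isProj_projS: "isProj n N lam Z (spanL vs) r (projS n N lam Z (spanL vs) r)"
proof -
  have "\<exists>p. isProj n N lam Z (spanL vs) r p" for r
  proof (induction vs arbitrary: r rule: rev_induct)
    case Nil
    have "spanL ([] :: 'z elt list) = {pzero}" by (simp add: spanL_def lincomb_def pzero_def)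
    moreover have "ipS n N lam Z (psub r pzero) pzero = 0" by (simp add: ipS_def pzero_def)
    ultimately have "isProj n N lam Z (spanL []) r pzero" by (simp add: isProj_def)
    then show ?case ..
  next
    case (snoc w vs)
    then show ?case using isProj_snoc by blast
  qed
  then show ?thesis unfolding projS_def by (rule someI_ex)
qed

lemma ip_le_nrm_mult_rotated:
  assumes pa_u: "ip pa u = 0" and pa_q: "ip pa q = 0" and u: "ip u u > 0"
    and x: "x \<le> \<bar>ip p u\<bar> / nrm u * nrm q"
  shows "ip p pa + x \<le> nrm p * nrm (padd pa q)"
proof -
  \<comment> \<open>v has the same norm as pa + q, because t u has the norm of q and is orthogonal to pa.\<close>
  define t where "t = (if ip p u < 0 then -1 else 1) * nrm q / nrm u"
  define v where "v = padd pa (pscale t u)"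
  have "t\<^sup>2 = (nrm q)\<^sup>2 / (nrm u)\<^sup>2"
    by (simp add: t_def power_divide power_mult_distrib)
  then have "t\<^sup>2 * ip u u = ip q q"
    using u ip_self_nonneg[of q] by (simp add: normS_def)
  moreover have "ip u pa = 0" "ip q pa = 0" using pa_u pa_q ip_commute by metis+
  ultimately have "ip v v = ip (padd pa q) (padd pa q)"
    using pa_u pa_q
    by (simp add: v_def ip_padd_left ip_padd_right ip_pscale_left ip_pscale_right power2_eq_square)
  then have nv: "nrm v = nrm (padd pa q)" by (simp add: normS_def)
  have "t * ip p u = \<bar>ip p u\<bar> / nrm u * nrm q"
    by (cases "ip p u < 0") (simp_all add: t_def)
  then have "ip p pa + x \<le> ip p pa + t * ip p u"
    using x by simp
  also have "\<dots> = ip p v" by (simp add: v_def ip_padd_right ip_pscale_right)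
  also have "\<dots> \<le> nrm p * nrm v" by (rule ip_le_nrm_mult)
  finally show ?thesis using nv by simp
qed

lemma greedy_step_bound:
  assumes arg: "isArgmax n N lam Z (spanL vs) r D w" and a: "a \<in> D"
  shows "ip r a \<le> nrm (projS n N lam Z (spanL (vs @ [w])) r) * nrm a"
proof -
  define S where "S = spanL vs"
  define p where "p = projS n N lam Z (spanL (vs @ [w])) r"
  define pa where "pa = projS n N lam Z S a"
  define q where "q = perpS n N lam Z S a"
  define u where "u = perpS n N lam Z S w"
  have PA: "pa \<in> S" "\<And>s. s \<in> S \<Longrightarrow> ip q s = 0"
    using isProj_projS[of vs a] unfolding isProj_def pa_def q_def perpS_def S_def by auto
  have PW: "projS n N lam Z S w \<in> S" "\<And>s. s \<in> S \<Longrightarrow> ip u s = 0"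
    using isProj_projS[of vs w] unfolding isProj_def u_def perpS_def S_def by auto
  have P: "\<And>s. s \<in> spanL (vs @ [w]) \<Longrightarrow> ip r s = ip p s"
    using isProj_projS[of "vs @ [w]" r] unfolding isProj_def p_def by (auto simp: ip_psub_left)
  have "u \<in> spanL (vs @ [w])"
    using PW(1) spanL_mono_snoc snoc_in_spanL unfolding u_def perpS_def S_def
    by (blast intro: spanL_psub)
  then have r_u: "ip r u = ip p u" by (rule P)
  have r_pa: "ip r pa = ip p pa" using PA(1) spanL_mono_snoc P unfolding S_def by blast
  have a_split: "a = padd pa q" by (simp add: pa_def q_def perpS_def padd_def psub_def)
  have u_pos: "nrm u > 0" using arg unfolding isArgmax_def u_def S_def by simp
  have "ip r q \<le> \<bar>ip p u\<bar> / nrm u * nrm q"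
  proof (cases "nrm q = 0")
    case True
    then show ?thesis using ip_null_right[of q r] by (simp add: normS_def)
  next
    case False
    then have "ip r q / nrm q \<le> ip r u / nrm u"
      using arg a nrm_nonneg[of q]
      unfolding isArgmax_def ratioS_def q_def u_def S_def by (simp add: less_le)
    also have "\<dots> \<le> \<bar>ip p u\<bar> / nrm u" using r_u u_pos by (simp add: divide_right_mono)
    finally show ?thesis using False nrm_nonneg[of q] by (simp add: divide_le_eq mult.commute)
  qed
  then have "ip p pa + ip r q \<le> nrm p * nrm (padd pa q)"
    using PA(2)[OF PA(1)] PW(2)[OF PA(1)] u_pos
    by (intro ip_le_nrm_mult_rotated) (simp_all add: ip_commute[of pa] normS_def)
  then show ?thesis using a_split r_pa by (simp add: ip_padd_right p_def)
qed

lemma Sup_ip_le_greedy: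
  assumes arg: "isArgmax n N lam Z (spanL vs) r D w" and D: "\<forall>a\<in>D. nrm a \<le> R"
  shows "Sup (ip r ` D) \<le> R * nrm (projS n N lam Z (spanL (vs @ [w])) r)"
proof (rule cSUP_least)
  show "D \<noteq> {}" using arg by (auto simp: isArgmax_def)
next
  fix a assume a: "a \<in> D"
  let ?p = "projS n N lam Z (spanL (vs @ [w])) r"
  have "ip r a \<le> nrm ?p * nrm a" using greedy_step_bound[OF arg a] .
  also have "\<dots> \<le> nrm ?p * R" using D a nrm_nonneg by (simp add: mult_left_mono)
  finally show "ip r a \<le> R * nrm ?p" by (simp add: mult.commute)
qed

lemma Sup_ip_le_greedy_psub:
  assumes arg: "isArgmax n N lam Z (spanL vs) (psub r p) D w" and D: "\<forall>b\<in>D. nrm b \<le> R"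
  shows "Sup (ip r ` D) \<le> R * nrm p + R * nrm (projS n N lam Z (spanL (vs @ [w])) (psub r p))"
proof (rule cSUP_least)
  show "D \<noteq> {}" using arg by (auto simp: isArgmax_def)
next
  fix b assume b: "b \<in> D"
  let ?pg = "projS n N lam Z (spanL (vs @ [w])) (psub r p)"
  have "ip r b = ip (psub r p) b + ip p b" by (simp add: ip_psub_left)
  also have "\<dots> \<le> nrm ?pg * nrm b + nrm p * nrm b"
    using greedy_step_bound[OF arg b] ip_le_nrm_mult[of p b] by (rule add_mono)
  also have "\<dots> \<le> nrm ?pg * R + nrm p * R"
    using D b nrm_nonneg by (intro add_mono mult_left_mono) auto
  finally show "ip r b \<le> R * nrm p + R * nrm ?pg" by (simp add: algebra_simps)
qed

end

lemma sum_lessThan_split: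
  "(n::nat) \<le> N \<Longrightarrow> (\<Sum>i<N. f i) = (\<Sum>i<n. f i) + (\<Sum>i\<in>{n..<N}. f i)"
  using sum.atLeastLessThan_concat[of 0 n N f] by (simp add: lessThan_atLeast0)

lemma normS_embF_le:
  assumes "n \<le> N" and "L2PN_sq N Z (\<lambda>z. h (fst z)) \<le> 1"
  shows "normS n N lam Z (embF h) \<le> 1"
proof -
  have "ipS n N lam Z (embF h) (embF h) = L2PN_sq N Z (\<lambda>z. h (fst z))"
    unfolding ipS_def embF_def L2PN_sq_def sum_lessThan_split[OF assms(1)]
    by (simp add: power2_eq_square algebra_simps)
  then show ?thesis using assms(2) by (simp add: normS_def)
qed

lemma normS_embG_le:
  assumes "n \<le> N" and "lam \<ge> 0" and "L2PN_sq N Z h \<le> 1"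
  shows "normS n N lam Z (embG h) \<le> max 1 (sqrt lam)"
proof -
  define A where "A = (\<Sum>i<n. (h (Z i))\<^sup>2) / real N"
  define B where "B = (\<Sum>i\<in>{n..<N}. (h (Z i))\<^sup>2) / real N"
  have "A \<ge> 0" "B \<ge> 0" unfolding A_def B_def by (simp_all add: sum_nonneg)
  have "A + B \<le> 1"
    using assms(3) unfolding L2PN_sq_def sum_lessThan_split[OF assms(1)] A_def B_def
    by (simp add: add_divide_distrib)
  have "ipS n N lam Z (embG h) (embG h) = B + lam * A"
    unfolding ipS_def embG_def A_def B_def by (simp add: power2_eq_square algebra_simps)
  also have "\<dots> \<le> max 1 lam * (A + B)"
  proof -
    have "lam * A \<le> max 1 lam * A" "1 * B \<le> max 1 lam * B"
      using \<open>A \<ge> 0\<close> \<open>B \<ge> 0\<close> by (intro mult_right_mono; simp)+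
    then show ?thesis by (simp add: distrib_left)
  qed
  also have "\<dots> \<le> max 1 lam" using \<open>A + B \<le> 1\<close> \<open>A \<ge> 0\<close> \<open>B \<ge> 0\<close> by (simp add: mult_left_le)
  also have "\<dots> = (max 1 (sqrt lam))\<^sup>2"
    using assms(2) by (cases "lam \<le> 1") (auto simp: max_def)
  finally show ?thesis unfolding normS_def by (simp add: real_le_lsqrt)
qed
theorem lemmaC4:
  fixes lam :: real and n m K :: nat
    and Z :: "nat \<Rightarrow> 'x \<times> 'w" and y :: "nat \<Rightarrow> real" and Y :: "'x \<times> 'w \<Rightarrow> real"
    and Df :: "('x \<Rightarrow> real) set" and Dg :: "('x \<times> 'w \<Rightarrow> real) set"
    and \<psi> :: "nat \<Rightarrow> 'x \<Rightarrow> real" and \<phi> :: "nat \<Rightarrow> 'x \<times> 'w \<Rightarrow> real"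
    and FG :: "nat \<Rightarrow> ('x \<times> 'w) elt"
  assumes lam: "lam \<ge> 0" and n: "n \<ge> 1" and m: "m \<ge> 1"
    and labels: "\<forall>i<n. Y (Z i) = y i"
    and Df_fin: "finite Df" and Dg_fin: "finite Dg"
    and Df_norm: "\<forall>h\<in>Df. L2PN_sq (n + m) Z (\<lambda>z. h (fst z)) \<le> 1"
    and Dg_norm: "\<forall>h\<in>Dg. L2PN_sq (n + m) Z h \<le> 1"
    and neg_closed: "\<forall>a\<in>embF ` Df \<union> embG ` Dg. \<exists>c\<in>embF ` Df \<union> embG ` Dg.
                        normS n (n + m) lam Z (padd a c) = 0"
    and init: "FG 0 = pzero"
    and choose_f: "\<forall>k\<in>{1..K}. isArgmax n (n + m) lam Z (SfA \<psi> (k - 1)) (resA Y FG k)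
                                  (embF ` Df) (embF (\<psi> k))"
    and choose_g: "\<forall>k\<in>{1..K}. isArgmax n (n + m) lam Z (SgA \<phi> (k - 1))
                                  (resgA n (n + m) lam Z Y \<psi> FG k) (embG ` Dg) (embG (\<phi> k))"
    and update: "\<forall>k\<in>{1..K}. FG k =
                   padd (padd (FG (k - 1)) (projS n (n + m) lam Z (SfA \<psi> k) (resA Y FG k)))
                        (projS n (n + m) lam Z (SgA \<phi> k) (resgA n (n + m) lam Z Y \<psi> FG k))"
  shows "\<forall>k\<in>{1..K}.
           Sup ((\<lambda>a. ipS n (n + m) lam Z (resA Y FG k) a) ` embF ` Df)
             \<le> max 1 (sqrt lam) * normS n (n + m) lam Z (projS n (n + m) lam Z (SfA \<psi> k) (resA Y FG k)) \<and>
           Sup ((\<lambda>b. ipS n (n + m) lam Z (resA Y FG k) b) ` embG ` Dg)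
             \<le> max 1 (sqrt lam) * normS n (n + m) lam Z (projS n (n + m) lam Z (SfA \<psi> k) (resA Y FG k))
               + max 1 (sqrt lam) * normS n (n + m) lam Z
                   (projS n (n + m) lam Z (SgA \<phi> k) (resgA n (n + m) lam Z Y \<psi> FG k))"
proof (rule ballI, goal_cases)
  case (1 k)
  \<comment> \<open>Only the two selection rules are needed: the bounds hold for an arbitrary residual.\<close>
  then obtain j where j: "k = Suc j" by (cases k) auto
  define R where "R = max 1 (sqrt lam)"
  have f_arg: "isArgmax n (n + m) lam Z (spanL (map (\<lambda>i. embF (\<psi> i)) [1..<Suc j]))
      (resA Y FG k) (embF ` Df) (embF (\<psi> (Suc j)))"
    using bspec[OF choose_f 1] by (simp add: j SfA_def)
  have g_arg: "isArgmax n (n + m) lam Z (spanL (map (\<lambda>i. embG (\<phi> i)) [1..<Suc j]))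
      (psub (resA Y FG k) (projS n (n + m) lam Z (SfA \<psi> k) (resA Y FG k)))
      (embG ` Dg) (embG (\<phi> (Suc j)))"
    using bspec[OF choose_g 1] by (simp add: j SgA_def resgA_def)
  have "\<forall>a\<in>embF ` Df. normS n (n + m) lam Z a \<le> R"
    using Df_norm normS_embF_le[of n "n + m"] unfolding R_def by (fastforce intro: order_trans)
  note f_bound = Sup_ip_le_greedy[OF lam f_arg this]
  have "\<forall>b\<in>embG ` Dg. normS n (n + m) lam Z b \<le> R"
    using Dg_norm normS_embG_le[of n "n + m" lam Z] lam unfolding R_def by auto
  note g_bound = Sup_ip_le_greedy_psub[OF lam g_arg this]
  show ?case using f_bound g_bound by (simp add: R_def j SfA_def SgA_def resgA_def)
qed

end
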